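(* Let $\alpha\ge0$ be a constant and $\eta_{\min}\in(0,1)$. For any $\delta\in(0,1)$, if an auditing algorithm $(\alpha,\delta)$-learns, with respect to $\mathcal{H}_{\dashv}$, every distribution $D$ over $[0,1]\times\{-1,+1\}$ with $\mathrm{err}(D,\mathcal{H}_{\dashv})\ge\eta_{\min}$, then the auditing complexity of the algorithm (in the worst case over such distributions) is $\Omega\big(\ln(\tfrac{1-\delta}{\delta})\ln(1/\eta_{\min})\big)$, where the hidden constants depend only on $\alpha$.
   Context: Setting: an algorithm may draw i.i.d. pairs $(X,Y)\sim D$; it sees $X$ but $Y$ is hidden until queried. The auditing complexity is the number of queries on points with label $-1$. An algorithm $(\alpha,\delta)$-learns $D$ with respect to $\mathcal{H}$ if with probability at least $1-\delta$ the returned $\hat h$ satisfies $\mathrm{err}(D,\hat h)\le(1+\alpha)\mathrm{err}(D,\mathcal{H})$, where $\mathrm{err}(D,h)=\Pr_{(X,Y)\sim D}[h(X)\ne Y]$ and $\mathrm{err}(D,\mathcal{H})=\min_{h\in\mathcal{H}}\mathrm{err}(D,h)$. For $a\in[0,1]$, $h_a(x)=+1$ if $x\ge a$ and $-1$ otherwise; $\mathcal{H}_{\dashv}=\{h_a:a\in[0,1]\}$. *)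

theory Defs
  imports "HOL-Probability.Probability"
begin

text \<open>Labels: True encodes +1, False encodes -1. A labelled example is a pair (x, y).\<close>

definition thr :: "real \<Rightarrow> real \<Rightarrow> bool" where
  "thr a x = (a \<le> x)"

definition valid_dist :: "(real \<times> bool) measure \<Rightarrow> bool" where
  "valid_dist D \<longleftrightarrow> prob_space D \<and>
     sets D = sets (borel \<Otimes>\<^sub>M count_space UNIV) \<and>
     (AE z in D. fst z \<in> {0..1})"

definition err :: "(real \<times> bool) measure \<Rightarrow> (real \<Rightarrow> bool) \<Rightarrow> real" where
  "err D h = measure D {z. h (fst z) \<noteq> snd z}"

definition err_H :: "(real \<times> bool) measure \<Rightarrow> real" where
  "err_H D = (INF a\<in>{0..1}. err D (thr a))"

text \<open>A (randomized) auditing algorithm. It has a random seed u (uniform on [0,1]) and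
  sees the unlabelled stream xs of i.i.d. draws. Given the history of answered queries
  (index, revealed label), it either asks for the label of some index (Some i) or stops
  (None); on stopping it outputs a threshold a (hypothesis thr a).\<close>
record auditor =
  nxt :: "real \<Rightarrow> (nat \<Rightarrow> real) \<Rightarrow> (nat \<times> bool) list \<Rightarrow> nat option"
  outp :: "real \<Rightarrow> (nat \<Rightarrow> real) \<Rightarrow> (nat \<times> bool) list \<Rightarrow> real"

primrec hist :: "auditor \<Rightarrow> real \<Rightarrow> (nat \<Rightarrow> real) \<Rightarrow> (nat \<Rightarrow> bool) \<Rightarrow> nat \<Rightarrow> (nat \<times> bool) list" where
  "hist A u xs ys 0 = []"
| "hist A u xs ys (Suc k) =
     (case nxt A u xs (hist A u xs ys k) of
        None \<Rightarrow> hist A u xs ys k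
      | Some i \<Rightarrow> hist A u xs ys k @ [(i, ys i)])"

definition terminates :: "auditor \<Rightarrow> real \<Rightarrow> (nat \<Rightarrow> real) \<Rightarrow> (nat \<Rightarrow> bool) \<Rightarrow> bool" where
  "terminates A u xs ys \<longleftrightarrow> (\<exists>k. nxt A u xs (hist A u xs ys k) = None)"

definition final_hist :: "auditor \<Rightarrow> real \<Rightarrow> (nat \<Rightarrow> real) \<Rightarrow> (nat \<Rightarrow> bool) \<Rightarrow> (nat \<times> bool) list" where
  "final_hist A u xs ys = hist A u xs ys (LEAST k. nxt A u xs (hist A u xs ys k) = None)"

text \<open>Number of queries on points with label -1 (possibly infinite if the run never stops).\<close>
definition audit_cost :: "auditor \<Rightarrow> real \<Rightarrow> (nat \<Rightarrow> real) \<Rightarrow> (nat \<Rightarrow> bool) \<Rightarrow> ennreal" where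
  "audit_cost A u xs ys = (SUP k. ennreal (real (length (filter (\<lambda>p. \<not> snd p) (hist A u xs ys k)))))"

definition run_space :: "(real \<times> bool) measure \<Rightarrow> (real \<times> (nat \<Rightarrow> real \<times> bool)) measure" where
  "run_space D = uniform_measure lborel {0..1} \<Otimes>\<^sub>M PiM UNIV (\<lambda>_. D)"

definition learns :: "real \<Rightarrow> real \<Rightarrow> auditor \<Rightarrow> (real \<times> bool) measure \<Rightarrow> bool" where
  "learns \<alpha> \<delta> A D \<longleftrightarrow>
     measure (run_space D)
       {(u, \<omega>). terminates A u (fst \<circ> \<omega>) (snd \<circ> \<omega>) \<and>
          (let a = outp A u (fst \<circ> \<omega>) (final_hist A u (fst \<circ> \<omega>) (snd \<circ> \<omega>))
           in a \<in> {0..1} \<and> err D (thr a) \<le> (1 + \<alpha>) * err_H D)} \<ge> 1 - \<delta>"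

definition expected_audit_cost :: "auditor \<Rightarrow> (real \<times> bool) measure \<Rightarrow> ennreal" where
  "expected_audit_cost A D =
     (\<integral>\<^sup>+ (u, \<omega>). audit_cost A u (fst \<circ> \<omega>) (snd \<circ> \<omega>) \<partial>run_space D)"

end

theory Submission
  imports Defs
begin

text \<open>The hard instances put an unavoidable mass \<open>\<eta>\<close> of negative examples at 1, negative
  examples of geometrically decreasing masses \<open>q ^ j\<close> at grid points \<open>p\<^sub>1 < \<dots> < p\<^sub>J\<close>, and
  positive examples at 1 otherwise; the flip \<open>D\<^sub>j\<close> turns each negative example at \<open>p\<^sub>j\<close>
  positive with probability \<open>1 - r\<close>. No threshold is \<open>(1 + \<alpha>)\<close>-optimal for both the base
  distribution and any \<open>D\<^sub>j\<close>, so a learner's good runs under the two are disjoint. Coupling both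
  through independent coins, a run that queries \<open>n\<close> negative labels at \<open>p\<^sub>j\<close> is reproduced
  under \<open>D\<^sub>j\<close> with probability at least \<open>r ^ n\<close>. The good runs for the base distribution have
  probability at least \<open>1 - \<delta>\<close> under it but at most \<open>\<delta>\<close> under \<open>D\<^sub>j\<close>, so Jensen's inequality
  forces the expected \<open>n\<close> on them to be at least \<open>(1 - \<delta>) ln ((1 - \<delta>) / \<delta>) / ln (1 / r)\<close>. Summing over the \<open>J \<approx> ln (1 / \<eta>) / ln (1 / q)\<close>
  grid points gives the bound.\<close>

lemma hist_extends: "\<exists>t. hist A u xs ys (k + d) = hist A u xs ys k @ t"
proof (induction d)
  case 0
  then show ?case by simp
next
  case (Suc d)
  then obtain t where "hist A u xs ys (k + d) = hist A u xs ys k @ t" by blast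
  then show ?case
    by (cases "nxt A u xs (hist A u xs ys (k + d))") auto
qed

lemma hist_stopped:
  "nxt A u xs (hist A u xs ys k) = None \<Longrightarrow> hist A u xs ys (k + d) = hist A u xs ys k"
  by (induction d) auto

lemma snd_in_hist: "p \<in> set (hist A u xs ys k) \<Longrightarrow> snd p = ys (fst p)"
  by (induction k) (auto split: option.splits)

lemma hist_cong_queried:
  assumes "\<And>k p. p \<in> set (hist A u xs ys k) \<Longrightarrow> ys' (fst p) = ys (fst p)"
  shows "hist A u xs ys' k = hist A u xs ys k"
proof (induction k)
  case 0
  then show ?case by simp
next
  case (Suc k)
  show ?case
  proof (cases "nxt A u xs (hist A u xs ys k)")
    case None
    then show ?thesis using Suc by simp
  next
    case (Some i)
    then have "(i, ys i) \<in> set (hist A u xs ys (Suc k))" by simp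
    then have "ys' i = ys i" using assms by fastforce
    then show ?thesis using Suc Some by simp
  qed
qed

lemma set_hist_subset_final_hist:
  assumes "terminates A u xs ys"
  shows "set (hist A u xs ys k) \<subseteq> set (final_hist A u xs ys)"
proof -
  define k0 where "k0 = (LEAST k. nxt A u xs (hist A u xs ys k) = None)"
  have stop: "nxt A u xs (hist A u xs ys k0) = None"
    using assms unfolding terminates_def k0_def by (rule LeastI_ex)
  have final: "final_hist A u xs ys = hist A u xs ys k0"
    unfolding final_hist_def k0_def ..
  show ?thesis
  proof (cases "k \<le> k0")
    case True
    then obtain d where "k0 = k + d" using le_Suc_ex by blast
    then show ?thesis using hist_extends[of A u xs ys k d] final by auto
  next
    case False
    then obtain d where "k = k0 + d" using le_Suc_ex[of k0 k] by auto
    then show ?thesis using hist_stopped[OF stop, of d] final by auto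
  qed
qed

lemma final_hist_cong_queried:
  assumes "terminates A u xs ys"
    and "\<And>p. p \<in> set (final_hist A u xs ys) \<Longrightarrow> ys' (fst p) = ys (fst p)"
  shows "terminates A u xs ys'" and "final_hist A u xs ys' = final_hist A u xs ys"
proof -
  have "\<And>k. hist A u xs ys' k = hist A u xs ys k"
    by (rule hist_cong_queried) (use set_hist_subset_final_hist[OF assms(1)] assms(2) in blast)
  then have "hist A u xs ys' = hist A u xs ys" by auto
  then show "terminates A u xs ys'" and "final_hist A u xs ys' = final_hist A u xs ys"
    using assms(1) unfolding terminates_def final_hist_def by simp_all
qed

definition good_runs ::
  "real \<Rightarrow> auditor \<Rightarrow> (real \<times> bool) measure \<Rightarrow> (real \<times> (nat \<Rightarrow> real \<times> bool)) set" where
  "good_runs \<alpha> A D = {(u, \<omega>). terminates A u (fst \<circ> \<omega>) (snd \<circ> \<omega>) \<and>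
     (let a = outp A u (fst \<circ> \<omega>) (final_hist A u (fst \<circ> \<omega>) (snd \<circ> \<omega>))
      in a \<in> {0..1} \<and> err D (thr a) \<le> (1 + \<alpha>) * err_H D)}"

lemma learns_iff_good_runs:
  "learns \<alpha> \<delta> A D \<longleftrightarrow> 1 - \<delta> \<le> measure (run_space D) (good_runs \<alpha> A D)"
  unfolding learns_def good_runs_def ..

lemma good_runs_sets:
  assumes "learns \<alpha> \<delta> A D" and "\<delta> < 1"
  shows "good_runs \<alpha> A D \<in> sets (run_space D)"
  using assms measure_notin_sets[of "good_runs \<alpha> A D" "run_space D"]
  unfolding learns_iff_good_runs by fastforce

lemma good_runs_cong_queried:
  assumes "(u, \<omega>) \<in> good_runs \<alpha> A D" and "fst \<circ> \<omega>' = fst \<circ> \<omega>"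
    and "\<And>p. p \<in> set (final_hist A u (fst \<circ> \<omega>) (snd \<circ> \<omega>)) \<Longrightarrow> snd (\<omega>' (fst p)) = snd (\<omega> (fst p))"
  shows "(u, \<omega>') \<in> good_runs \<alpha> A D"
proof -
  have "terminates A u (fst \<circ> \<omega>) (snd \<circ> \<omega>)" using assms(1) unfolding good_runs_def by simp
  from final_hist_cong_queried[OF this, of "snd \<circ> \<omega>'"] assms(3)
  have "terminates A u (fst \<circ> \<omega>) (snd \<circ> \<omega>')"
    and "final_hist A u (fst \<circ> \<omega>) (snd \<circ> \<omega>') = final_hist A u (fst \<circ> \<omega>) (snd \<circ> \<omega>)"
    by auto
  with assms(1,2) show ?thesis unfolding good_runs_def by simp
qed

definition neg_queries_at :: "auditor \<Rightarrow> real \<Rightarrow> real \<times> (nat \<Rightarrow> real \<times> bool) \<Rightarrow> nat" where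
  "neg_queries_at A p = (\<lambda>(u, \<omega>).
     length (filter (\<lambda>e. \<not> snd e \<and> fst (\<omega> (fst e)) = p) (final_hist A u (fst \<circ> \<omega>) (snd \<circ> \<omega>))))"

lemma sum_length_filter_eq_le:
  assumes "finite P"
  shows "(\<Sum>p\<in>P. length (filter (\<lambda>x. Q x \<and> g x = p) xs)) \<le> length (filter Q xs)"
proof (induction xs)
  case Nil
  then show ?case by simp
next
  case (Cons x xs)
  have "(\<Sum>p\<in>P. length (filter (\<lambda>x. Q x \<and> g x = p) (x # xs)))
      = (\<Sum>p\<in>P. length (filter (\<lambda>x. Q x \<and> g x = p) xs)) + (\<Sum>p\<in>P. (if Q x \<and> g x = p then 1 else 0))"
    by (simp add: sum.distrib[symmetric]) (intro sum.cong, auto)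
  also have "\<dots> \<le> length (filter Q xs) + (if Q x then 1 else 0)"
    using Cons assms by (intro add_mono) (auto simp: sum.delta eq_commute)
  also have "\<dots> = length (filter Q (x # xs))" by simp
  finally show ?case .
qed

lemma sum_neg_queries_at_le_audit_cost:
  assumes "finite P"
  shows "ennreal (\<Sum>p\<in>P. real (neg_queries_at A p (u, \<omega>))) \<le> audit_cost A u (fst \<circ> \<omega>) (snd \<circ> \<omega>)"
proof -
  let ?h = "final_hist A u (fst \<circ> \<omega>) (snd \<circ> \<omega>)"
  have "(\<Sum>p\<in>P. neg_queries_at A p (u, \<omega>)) \<le> length (filter (\<lambda>e. \<not> snd e) ?h)"
    unfolding neg_queries_at_def using sum_length_filter_eq_le[OF assms] by simp
  then have "ennreal (\<Sum>p\<in>P. real (neg_queries_at A p (u, \<omega>))) \<le> ennreal (length (filter (\<lambda>e. \<not> snd e) ?h))"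
    by (intro ennreal_leI) (simp flip: of_nat_sum)
  also have "\<dots> \<le> audit_cost A u (fst \<circ> \<omega>) (snd \<circ> \<omega>)"
    unfolding audit_cost_def final_hist_def by (rule SUP_upper) auto
  finally show ?thesis .
qed


section \<open>Product measures\<close>

lemma emeasure_PiM_bernoulli_all_True:
  assumes "finite Q" "0 \<le> r" "r \<le> 1"
  shows "emeasure (PiM UNIV (\<lambda>_. measure_pmf (bernoulli_pmf r))) {c. \<forall>i\<in>Q. c i} = ennreal r ^ card Q"
proof -
  let ?B = "measure_pmf (bernoulli_pmf r)"
  have "{c. \<forall>i\<in>Q. c i} = prod_emb UNIV (\<lambda>_. ?B) Q (Pi\<^sub>E Q (\<lambda>_. {True}))"
    unfolding prod_emb_def by (auto simp: space_PiM restrict_def fun_eq_iff)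
  also have "emeasure (PiM UNIV (\<lambda>_. ?B)) \<dots> = (\<Prod>i\<in>Q. emeasure ?B {True})"
    by (rule emeasure_PiM_emb) (auto simp: assms measure_pmf.prob_space_axioms)
  also have "\<dots> = ennreal r ^ card Q"
    using assms by (simp add: emeasure_pmf_single)
  finally show ?thesis .
qed

lemma measurable_emeasure_section:
  assumes "sigma_finite_measure M" and F: "F \<in> measurable (N \<Otimes>\<^sub>M M) S" and A: "A \<in> sets S"
  shows "(\<lambda>b. emeasure M {v \<in> space M. F (b, v) \<in> A}) \<in> borel_measurable N"
proof -
  interpret M: sigma_finite_measure M by fact
  have "F -` A \<inter> space (N \<Otimes>\<^sub>M M) \<in> sets (N \<Otimes>\<^sub>M M)"
    using F A by (rule measurable_sets)
  from M.measurable_emeasure_Pair[OF this] show ?thesis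
    by (rule measurable_cong[THEN iffD1, rotated]) (auto intro!: arg_cong2[where f=emeasure] simp: space_pair_measure)
qed

lemma emeasure_distr_pair_measure:
  assumes "sigma_finite_measure M" and F: "F \<in> measurable (N \<Otimes>\<^sub>M M) S" and A: "A \<in> sets S"
  shows "emeasure (distr (N \<Otimes>\<^sub>M M) S F) A = (\<integral>\<^sup>+b. emeasure M {v \<in> space M. F (b, v) \<in> A} \<partial>N)"
proof -
  interpret M: sigma_finite_measure M by fact
  have "emeasure (distr (N \<Otimes>\<^sub>M M) S F) A = emeasure (N \<Otimes>\<^sub>M M) (F -` A \<inter> space (N \<Otimes>\<^sub>M M))"
    using F A by (rule emeasure_distr)
  also have "\<dots> = (\<integral>\<^sup>+b. emeasure M (Pair b -` (F -` A \<inter> space (N \<Otimes>\<^sub>M M))) \<partial>N)"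
    using F A by (intro M.emeasure_pair_measure_alt measurable_sets)
  also have "\<dots> = (\<integral>\<^sup>+b. emeasure M {v \<in> space M. F (b, v) \<in> A} \<partial>N)"
    by (intro nn_integral_cong arg_cong2[where f=emeasure]) (auto simp: space_pair_measure)
  finally show ?thesis .
qed

lemma measurable_PiM_pointwise:
  assumes F: "F \<in> measurable (N \<Otimes>\<^sub>M M) K"
  shows "(\<lambda>(\<omega>, c) i. F (c i, \<omega> i))
    \<in> measurable (PiM UNIV (\<lambda>_::nat. M) \<Otimes>\<^sub>M PiM UNIV (\<lambda>_::nat. N)) (PiM UNIV (\<lambda>_. K))"
proof (rule measurable_PiM_single')
  fix i :: nat
  have "(\<lambda>x. (snd x i, fst x i)) \<in> measurable (PiM UNIV (\<lambda>_. M) \<Otimes>\<^sub>M PiM UNIV (\<lambda>_. N)) (N \<Otimes>\<^sub>M M)"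
    by measurable
  from measurable_compose[OF this F]
  show "(\<lambda>x. ((\<lambda>(\<omega>, c) i. F (c i, \<omega> i)) x) i) \<in> measurable (PiM UNIV (\<lambda>_. M) \<Otimes>\<^sub>M PiM UNIV (\<lambda>_. N)) K"
    by (simp add: case_prod_beta)
qed (auto simp: space_PiM space_pair_measure PiE_iff intro!: measurable_space[OF F])

lemma emeasure_PiM_pointwise_section:
  assumes "prob_space M" and F: "F \<in> measurable (N \<Otimes>\<^sub>M M) S"
    and J: "finite J" and A: "\<And>i. i \<in> J \<Longrightarrow> A i \<in> sets S" and c: "c \<in> space (PiM UNIV (\<lambda>_::nat. N))"
  shows "emeasure (PiM UNIV (\<lambda>_. M)) {\<omega> \<in> space (PiM UNIV (\<lambda>_. M)). \<forall>i\<in>J. F (c i, \<omega> i) \<in> A i}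
    = (\<Prod>i\<in>J. emeasure M {v \<in> space M. F (c i, v) \<in> A i})"
proof -
  have "{\<omega> \<in> space (PiM UNIV (\<lambda>_. M)). \<forall>i\<in>J. F (c i, \<omega> i) \<in> A i}
      = prod_emb UNIV (\<lambda>_. M) J (Pi\<^sub>E J (\<lambda>i. {v \<in> space M. F (c i, v) \<in> A i}))"
    by (auto simp: prod_emb_def space_PiM PiE_iff)
  moreover have "{v \<in> space M. F (c i, v) \<in> A i} \<in> sets M" if "i \<in> J" for i
  proof -
    have "(\<lambda>v. F (c i, v)) \<in> measurable M S" using c by (intro measurable_Pair2[OF F]) (auto simp: space_PiM)
    from measurable_sets[OF this A[OF that]] show ?thesis
      by (simp add: vimage_def Int_def conj_commute)
  qed
  ultimately show ?thesis
    using J assms(1) by (simp add: emeasure_PiM_emb prob_space.emeasure_space_1)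
qed

lemma distr_PiM_pointwise:
  fixes M :: "'a measure" and N :: "'b measure" and S :: "'c measure"
  assumes M: "prob_space M" and N: "prob_space N" and F: "F \<in> measurable (N \<Otimes>\<^sub>M M) S"
  shows "distr (PiM UNIV (\<lambda>_::nat. M) \<Otimes>\<^sub>M PiM UNIV (\<lambda>_::nat. N)) (PiM UNIV (\<lambda>_. distr (N \<Otimes>\<^sub>M M) S F))
           (\<lambda>(\<omega>, c) i. F (c i, \<omega> i)) = PiM UNIV (\<lambda>_. distr (N \<Otimes>\<^sub>M M) S F)"
    (is "distr ?PP ?PK ?Phi = _")
proof -
  let ?K = "distr (N \<Otimes>\<^sub>M M) S F"
  let ?PM = "PiM UNIV (\<lambda>_::nat. M)" and ?PN = "PiM UNIV (\<lambda>_::nat. N)"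
  interpret M: prob_space M by fact
  interpret N: prob_space N by fact
  interpret PM: prob_space ?PM by (rule prob_space_PiM) (rule M)
  interpret PN: prob_space ?PN by (rule prob_space_PiM) (rule N)
  interpret PP: pair_prob_space ?PM ?PN by unfold_locales
  interpret N_product: product_prob_space "\<lambda>_::nat. N" UNIV
    by (rule product_prob_spaceI) (rule N)
  have K: "prob_space ?K"
    using prob_space_pair[OF N M] F by (rule prob_space.prob_space_distr)
  have F_K: "F \<in> measurable (N \<Otimes>\<^sub>M M) ?K"
    using F by (simp add: measurable_cong_sets[OF refl sets_distr])
  have Phi: "?Phi \<in> measurable ?PP ?PK"
    using F_K by (rule measurable_PiM_pointwise)
  show ?thesis
  proof (rule measure_eqI_PiM_infinite)
    show "finite_measure (distr ?PP ?PK ?Phi)"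
      using Phi by (intro prob_space.finite_measure PP.prob_space_distr)
  next
    fix A J assume J: "finite J" "J \<subseteq> (UNIV::nat set)" and A: "\<And>i. i \<in> J \<Longrightarrow> A i \<in> sets ?K"
    then have A_S: "\<And>i. i \<in> J \<Longrightarrow> A i \<in> sets S" by simp
    let ?X = "prod_emb UNIV (\<lambda>_. ?K) J (Pi\<^sub>E J A)"
    define g where "g i b = emeasure M {v \<in> space M. F (b, v) \<in> A i}" for i b
    have X: "?X \<in> sets ?PK" using J A by (intro sets_PiM_I) auto
    have g_meas: "g i \<in> borel_measurable N" if "i \<in> J" for i
      unfolding g_def using M.sigma_finite_measure_axioms F A_S[OF that] by (rule measurable_emeasure_section)
    have "emeasure (distr ?PP ?PK ?Phi) ?X = emeasure ?PP (?Phi -` ?X \<inter> space ?PP)"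
      using Phi X by (rule emeasure_distr)
    also have "\<dots> = (\<integral>\<^sup>+c. emeasure ?PM ((\<lambda>\<omega>. (\<omega>, c)) -` (?Phi -` ?X \<inter> space ?PP)) \<partial>?PN)"
      using Phi X by (intro PP.emeasure_pair_measure_alt2 measurable_sets)
    also have "\<dots> = (\<integral>\<^sup>+c. (\<Prod>i\<in>J. g i (c i)) \<partial>?PN)"
    proof (rule nn_integral_cong)
      fix c assume c: "c \<in> space ?PN"
      have "(\<lambda>\<omega>. (\<omega>, c)) -` (?Phi -` ?X \<inter> space ?PP) = {\<omega> \<in> space ?PM. \<forall>i\<in>J. F (c i, \<omega> i) \<in> A i}"
        using c by (auto simp: prod_emb_def space_pair_measure space_PiM PiE_iff intro!: measurable_space[OF F])
      then show "emeasure ?PM ((\<lambda>\<omega>. (\<omega>, c)) -` (?Phi -` ?X \<inter> space ?PP)) = (\<Prod>i\<in>J. g i (c i))"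
        unfolding g_def using emeasure_PiM_pointwise_section[OF M F J(1) A_S c] by simp
    qed
    also have "\<dots> = (\<integral>\<^sup>+x. (\<Prod>i\<in>J. g i (x i)) \<partial>distr ?PN (PiM J (\<lambda>_. N)) (\<lambda>x. restrict x J))"
      using J g_meas by (subst nn_integral_distr) (auto intro!: nn_integral_cong)
    also have "\<dots> = (\<integral>\<^sup>+x. (\<Prod>i\<in>J. g i (x i)) \<partial>PiM J (\<lambda>_. N))"
      using J by (simp add: N_product.distr_PiM_restrict_finite)
    also have "\<dots> = (\<Prod>i\<in>J. \<integral>\<^sup>+b. g i b \<partial>N)"
      using J g_meas by (intro N_product.product_nn_integral_prod) auto
    also have "\<dots> = (\<Prod>i\<in>J. emeasure ?K (A i))"
      unfolding g_def using M.sigma_finite_measure_axioms F A_S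
      by (intro prod.cong refl emeasure_distr_pair_measure[symmetric])
    also have "\<dots> = emeasure ?PK ?X"
      using J A K by (intro emeasure_PiM_emb[symmetric]) auto
    finally show "emeasure (distr ?PP ?PK ?Phi) ?X = emeasure ?PK ?X" .
  qed simp_all
qed

section \<open>A change-of-measure inequality\<close>

lemma tangent_ln_le:
  fixes m x :: real
  shows "0 < m \<Longrightarrow> 0 < x \<Longrightarrow> 1 - ln m - x / m \<le> - ln x"
  using ln_le_minus_one[of "x / m"] by (simp add: ln_div)

lemma mult_ln_div_mono:
  fixes \<delta> p :: real
  assumes "0 < \<delta>" "\<delta> \<le> 1/2" "1 - \<delta> \<le> p"
  shows "(1 - \<delta>) * ln ((1 - \<delta>) / \<delta>) \<le> p * ln (p / \<delta>)"
proof (rule mult_mono)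
  have "1 \<le> (1 - \<delta>) / \<delta>" using assms by (simp add: field_simps)
  then show "0 \<le> ln ((1 - \<delta>) / \<delta>)" by simp
qed (use assms in \<open>auto simp: divide_right_mono\<close>)

lemma integral_tangent_ln_ge:
  fixes \<psi> :: "'a \<Rightarrow> real"
  assumes "prob_space R" and E: "E \<in> sets R" and p_pos: "0 < measure R E"
    and \<psi>_meas: "\<psi> \<in> borel_measurable R" and \<psi>_range: "\<And>z. 0 \<le> \<psi> z \<and> \<psi> z \<le> 1"
    and \<psi>_integral: "(\<integral>z. indicator E z * \<psi> z \<partial>R) \<le> \<delta>" and \<delta>: "0 < \<delta>"
  defines "m \<equiv> \<delta> / measure R E"
  shows "integrable R (\<lambda>z. indicator E z * max 0 (1 - ln m - \<psi> z / m))" (is "integrable R ?h")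
    and "measure R E * ln (measure R E / \<delta>) \<le> (\<integral>z. indicator E z * max 0 (1 - ln m - \<psi> z / m) \<partial>R)"
proof -
  interpret R: prob_space R by fact
  have m_pos: "0 < m" unfolding m_def using \<delta> p_pos by simp
  have "norm (?h z) \<le> 1 + \<bar>ln m\<bar>" for z
  proof -
    have "0 \<le> \<psi> z / m" using \<psi>_range[of z] m_pos by simp
    then show ?thesis by (auto simp: indicator_def)
  qed
  with E \<psi>_meas show int_h: "integrable R ?h"
    by (intro R.integrable_const_bound[where B="1 + \<bar>ln m\<bar>"]) auto
  have int_\<psi>E: "integrable R (\<lambda>z. indicator E z * \<psi> z)" and int_E: "integrable R (indicator E :: 'a \<Rightarrow> real)"
    using \<psi>_range \<psi>_meas E by (auto intro!: R.integrable_const_bound[where B=1] simp: indicator_def)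
  have "measure R E * ln (measure R E / \<delta>) = (1 - ln m) * measure R E - \<delta> / m"
    using p_pos \<delta> unfolding m_def by (simp add: ln_div field_simps)
  also have "\<dots> \<le> (1 - ln m) * measure R E - (\<integral>z. indicator E z * \<psi> z \<partial>R) / m"
    using \<psi>_integral m_pos by (simp add: divide_right_mono)
  also have "\<dots> = (\<integral>z. (1 - ln m) * indicator E z - indicator E z * \<psi> z / m \<partial>R)"
    using int_\<psi>E int_E E by simp
  also have "\<dots> \<le> (\<integral>z. ?h z \<partial>R)"
  proof (rule integral_mono[OF _ int_h])
    show "integrable R (\<lambda>z. (1 - ln m) * indicator E z - indicator E z * \<psi> z / m)"
      using int_\<psi>E int_E by auto
  qed (auto simp: indicator_def)
  finally show "measure R E * ln (measure R E / \<delta>) \<le> (\<integral>z. ?h z \<partial>R)" .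
qed

text \<open>Bounding \<open>- ln \<psi>\<close> by its tangent at \<open>m = \<delta> / P(E)\<close> is the linearised Jensen inequality; it
  yields a measurable minorant \<open>g\<close> of \<open>n\<close> on \<open>E\<close>, whereas \<open>n\<close> itself need not be measurable.\<close>

lemma change_of_measure_bound:
  fixes R :: "'a measure" and \<psi> :: "'a \<Rightarrow> real" and n :: "'a \<Rightarrow> nat"
  assumes R: "prob_space R" and E: "E \<in> sets R" and E_large: "1 - \<delta> \<le> measure R E"
    and \<psi>_meas: "\<psi> \<in> borel_measurable R" and \<psi>_range: "\<And>z. 0 \<le> \<psi> z \<and> \<psi> z \<le> 1"
    and \<psi>_integral: "integral\<^sup>L R \<psi> \<le> \<delta>" and \<psi>_E: "\<And>z. z \<in> E \<Longrightarrow> r ^ n z \<le> \<psi> z"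
    and \<delta>: "0 < \<delta>" "\<delta> \<le> 1/2" and r: "0 < r" "r < 1"
  shows "\<exists>g \<in> borel_measurable R. (\<forall>z. 0 \<le> g z) \<and> (\<forall>z\<in>E. g z \<le> real (n z)) \<and>
    ennreal ((1 - \<delta>) * ln ((1 - \<delta>) / \<delta>) / ln (1 / r)) \<le> (\<integral>\<^sup>+z. indicator E z * ennreal (g z) \<partial>R)"
proof -
  interpret R: prob_space R by fact
  define p where "p = measure R E"
  define m where "m = \<delta> / p"
  define L where "L = ln (1 / r)"
  define g where "g z = max 0 (1 - ln m - \<psi> z / m) / L" for z
  have p_pos: "0 < p" using E_large \<delta> unfolding p_def by linarith
  have m_pos: "0 < m" unfolding m_def using \<delta> p_pos by simp
  have L_pos: "0 < L" unfolding L_def using r by simp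
  have g_meas [measurable]: "g \<in> borel_measurable R" unfolding g_def using \<psi>_meas by measurable
  have g_nonneg: "0 \<le> g z" for z unfolding g_def using L_pos by auto
  have g_le_n: "g z \<le> real (n z)" if z: "z \<in> E" for z
  proof -
    have "0 < \<psi> z" using \<psi>_E[OF z] r by (meson order_less_le_trans zero_less_power)
    then have "1 - ln m - \<psi> z / m \<le> - ln (\<psi> z)" by (rule tangent_ln_le[OF m_pos])
    also have "- ln (\<psi> z) \<le> real (n z) * L"
    proof -
      have "ln (r ^ n z) \<le> ln (\<psi> z)" using \<psi>_E[OF z] r \<open>0 < \<psi> z\<close> by (subst ln_le_cancel_iff) auto
      then show ?thesis using r by (simp add: L_def ln_realpow ln_div)
    qed
    finally show ?thesis unfolding g_def using L_pos by (simp add: divide_le_eq)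
  qed
  have "(\<integral>z. indicator E z * \<psi> z \<partial>R) \<le> (\<integral>z. \<psi> z \<partial>R)"
    using \<psi>_range \<psi>_meas E
    by (intro integral_mono R.integrable_const_bound[where B=1]) (auto simp: indicator_def)
  then have "(\<integral>z. indicator E z * \<psi> z \<partial>R) \<le> \<delta>" using \<psi>_integral by linarith
  note tangent = integral_tangent_ln_ge[OF R E p_pos[unfolded p_def] \<psi>_meas \<psi>_range this \<delta>(1), folded p_def m_def]
  have "(1 - \<delta>) * ln ((1 - \<delta>) / \<delta>) / L \<le> p * ln (p / \<delta>) / L"
    using mult_ln_div_mono[OF \<delta> E_large[folded p_def]] L_pos by (simp add: divide_right_mono)
  also have "\<dots> \<le> (\<integral>z. indicator E z * g z \<partial>R)"
    using tangent(2) L_pos by (simp add: g_def divide_right_mono)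
  finally have integral_ge: "(1 - \<delta>) * ln ((1 - \<delta>) / \<delta>) / L \<le> (\<integral>z. indicator E z * g z \<partial>R)" .
  have "integrable R (\<lambda>z. indicator E z * g z)"
    using integrable_divide_zero[OF tangent(1), of L] by (simp add: g_def)
  then have "(\<integral>\<^sup>+z. ennreal (indicator E z * g z) \<partial>R) = ennreal (\<integral>z. indicator E z * g z \<partial>R)"
    using g_nonneg by (intro nn_integral_eq_integral) (auto simp: indicator_def)
  moreover have "(\<integral>\<^sup>+z. indicator E z * ennreal (g z) \<partial>R) = (\<integral>\<^sup>+z. ennreal (indicator E z * g z) \<partial>R)"
    by (intro nn_integral_cong) (auto simp: indicator_def)
  ultimately show ?thesis
    using integral_ge g_nonneg g_le_n unfolding L_def by (intro bexI[OF _ g_meas]) (auto intro: ennreal_leI)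
qed


section \<open>Flipping negative labels at a point\<close>

definition flip_label :: "real \<Rightarrow> bool \<times> real \<times> bool \<Rightarrow> real \<times> bool" where
  "flip_label p = (\<lambda>(b, x, y). (x, y \<or> (\<not> b \<and> x = p)))"

definition flip_dist :: "real \<Rightarrow> real \<Rightarrow> (real \<times> bool) measure \<Rightarrow> (real \<times> bool) measure" where
  "flip_dist r p D =
     distr (measure_pmf (bernoulli_pmf r) \<Otimes>\<^sub>M D) (borel \<Otimes>\<^sub>M count_space UNIV) (flip_label p)"

definition flip_err :: "(real \<times> bool) measure \<Rightarrow> real \<Rightarrow> (real \<Rightarrow> bool) \<Rightarrow> real" where
  "flip_err D p h = measure D {z. h (fst z) \<noteq> (snd z \<or> fst z = p)}"

lemma sets_flip_dist [measurable_cong]: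
  "sets (flip_dist r p D) = sets (borel \<Otimes>\<^sub>M count_space UNIV)"
  unfolding flip_dist_def by simp

lemma sets_thr_err:
  "{z :: real \<times> bool. thr a (fst z) \<noteq> snd z} \<in> sets (borel \<Otimes>\<^sub>M count_space UNIV)"
proof -
  have "{z \<in> space (borel \<Otimes>\<^sub>M count_space UNIV). thr a (fst z) \<noteq> snd z} \<in> sets (borel \<Otimes>\<^sub>M count_space UNIV)"
    unfolding thr_def by measurable
  then show ?thesis by (simp add: space_pair_measure)
qed

locale example_distribution = prob_space D for D :: "(real \<times> bool) measure" +
  assumes sets_D [measurable_cong]: "sets D = sets (borel \<Otimes>\<^sub>M count_space UNIV)"
begin

lemma space_D [simp]: "space D = UNIV"
  using sets_eq_imp_space_eq[OF sets_D] by (simp add: space_pair_measure)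

lemma flip_label_measurable [measurable]:
  "flip_label p \<in> measurable (measure_pmf (bernoulli_pmf r) \<Otimes>\<^sub>M D) (borel \<Otimes>\<^sub>M count_space UNIV)"
proof -
  have sets_eq: "sets (measure_pmf (bernoulli_pmf r) \<Otimes>\<^sub>M D) = sets (count_space UNIV \<Otimes>\<^sub>M (borel \<Otimes>\<^sub>M count_space UNIV))"
    by (rule sets_pair_measure_cong) (simp_all add: sets_D)
  show ?thesis
    unfolding flip_label_def by (simp only: measurable_cong_sets[OF sets_eq refl]) measurable
qed

lemma prob_space_flip_dist: "prob_space (flip_dist r p D)"
proof -
  interpret pair_prob_space "measure_pmf (bernoulli_pmf r)" D by unfold_locales
  show ?thesis unfolding flip_dist_def by (rule prob_space_distr) (rule flip_label_measurable)
qed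

lemma measure_flip_dist:
  assumes X: "X \<in> sets (borel \<Otimes>\<^sub>M count_space UNIV)" and r: "0 \<le> r" "r \<le> 1"
  shows "measure (flip_dist r p D) X =
    r * measure D X + (1 - r) * measure D {z. (fst z, snd z \<or> fst z = p) \<in> X}"
proof -
  let ?B = "measure_pmf (bernoulli_pmf r)"
  let ?Y = "{z. (fst z, snd z \<or> fst z = p) \<in> X}"
  interpret Dr: prob_space "flip_dist r p D" by (rule prob_space_flip_dist)
  have "emeasure (flip_dist r p D) X = emeasure (?B \<Otimes>\<^sub>M D) (flip_label p -` X \<inter> space (?B \<Otimes>\<^sub>M D))"
    unfolding flip_dist_def using X by (intro emeasure_distr) auto
  also have "\<dots> = (\<integral>\<^sup>+b. emeasure D (Pair b -` (flip_label p -` X \<inter> space (?B \<Otimes>\<^sub>M D))) \<partial>?B)"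
    using X by (intro emeasure_pair_measure_alt) measurable
  also have "\<dots> = emeasure D X * ennreal r + emeasure D ?Y * ennreal (1 - r)"
  proof -
    have "Pair True -` (flip_label p -` X \<inter> space (?B \<Otimes>\<^sub>M D)) = X"
      and "Pair False -` (flip_label p -` X \<inter> space (?B \<Otimes>\<^sub>M D)) = ?Y"
      by (auto simp: flip_label_def space_pair_measure)
    with r show ?thesis by (simp add: nn_integral_bernoulli_pmf)
  qed
  also have "\<dots> = ennreal (r * measure D X) + ennreal ((1 - r) * measure D ?Y)"
    using r by (simp add: emeasure_eq_measure ennreal_mult'' mult.commute)
  also have "\<dots> = ennreal (r * measure D X + (1 - r) * measure D ?Y)"
    using r by (intro ennreal_plus[symmetric]) auto
  finally have "ennreal (measure (flip_dist r p D) X) = ennreal (r * measure D X + (1 - r) * measure D ?Y)"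
    by (simp add: Dr.emeasure_eq_measure)
  then show ?thesis
    using r by (subst (asm) ennreal_inj) auto
qed

lemma err_flip_dist:
  "0 \<le> r \<Longrightarrow> r \<le> 1 \<Longrightarrow> err (flip_dist r p D) (thr a) = r * err D (thr a) + (1 - r) * flip_err D p (thr a)"
  unfolding err_def flip_err_def using measure_flip_dist[OF sets_thr_err] by simp

end

lemma example_distribution_if_valid_dist: "valid_dist D \<Longrightarrow> example_distribution D"
  unfolding valid_dist_def example_distribution_def example_distribution_axioms_def by blast

lemma valid_dist_flip_dist:
  assumes "valid_dist D"
  shows "valid_dist (flip_dist r p D)"
proof -
  interpret example_distribution D using assms by (rule example_distribution_if_valid_dist)
  interpret BD: pair_prob_space "measure_pmf (bernoulli_pmf r)" D by unfold_locales
  have "AE w in measure_pmf (bernoulli_pmf r) \<Otimes>\<^sub>M D. fst (snd w) \<in> {0..1}"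
  proof (rule BD.AE_pair_measure)
    show "{w \<in> space (measure_pmf (bernoulli_pmf r) \<Otimes>\<^sub>M D). fst (snd w) \<in> {0..1::real}}
        \<in> sets (measure_pmf (bernoulli_pmf r) \<Otimes>\<^sub>M D)"
      by measurable
    show "AE b in measure_pmf (bernoulli_pmf r). AE z in D. fst (snd (b, z)) \<in> {0..1}"
      using assms unfolding valid_dist_def by simp
  qed
  moreover have "{z \<in> space (borel \<Otimes>\<^sub>M count_space UNIV). fst z \<in> {0..1::real}}
      \<in> sets (borel \<Otimes>\<^sub>M count_space UNIV)"
    by measurable
  ultimately have "AE z in flip_dist r p D. fst z \<in> {0..1}"
    unfolding flip_dist_def
    by (subst AE_distr_iff[OF flip_label_measurable]) (auto simp: flip_label_def case_prod_beta)
  then show ?thesis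
    unfolding valid_dist_def using prob_space_flip_dist sets_flip_dist by blast
qed


section \<open>Coupling runs under a distribution and its flip\<close>

lemma space_run_space [simp]: "space M = UNIV \<Longrightarrow> space (run_space M) = UNIV"
  by (simp add: run_space_def space_pair_measure space_PiM)

locale flip_coupling = example_distribution D for D +
  fixes r p :: real
  assumes r_pos: "0 < r" and r_less_1: "r < 1"
begin

abbreviation coins :: "(nat \<Rightarrow> bool) measure" where
  "coins \<equiv> PiM UNIV (\<lambda>_. measure_pmf (bernoulli_pmf r))"

abbreviation samples :: "(real \<times> bool) measure \<Rightarrow> (nat \<Rightarrow> real \<times> bool) measure" where
  "samples M \<equiv> PiM UNIV (\<lambda>_. M)"

abbreviation seed :: "real measure" where
  "seed \<equiv> uniform_measure lborel {0..1}"

definition flip_run ::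
  "(real \<times> (nat \<Rightarrow> real \<times> bool)) \<times> (nat \<Rightarrow> bool) \<Rightarrow> real \<times> (nat \<Rightarrow> real \<times> bool)" where
  "flip_run = (\<lambda>((u, \<omega>), c). (u, \<lambda>i. flip_label p (c i, \<omega> i)))"

interpretation coins: prob_space coins
  by (rule prob_space_PiM) (rule measure_pmf.prob_space_axioms)

interpretation seed: prob_space seed
  by (rule prob_space_uniform_measure) auto

interpretation samples: prob_space "samples D"
  by (rule prob_space_PiM) (rule prob_space_axioms)

interpretation run: prob_space "run_space D"
  unfolding run_space_def by (rule prob_space_pair) unfold_locales

lemma sets_run_space_flip_dist: "sets (run_space (flip_dist r p D)) = sets (run_space D)"
  unfolding run_space_def
  by (intro sets_pair_measure_cong sets_PiM_cong) (simp_all add: sets_flip_dist sets_D)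

lemma flip_samples_measurable:
  "(\<lambda>(\<omega>, c) i. flip_label p (c i, \<omega> i)) \<in> measurable (samples D \<Otimes>\<^sub>M coins) (samples D)"
  using flip_label_measurable[of p r]
  by (intro measurable_PiM_pointwise) (simp add: measurable_cong_sets[OF refl sets_D])

lemma flip_run_measurable: "flip_run \<in> measurable (run_space D \<Otimes>\<^sub>M coins) (run_space D)"
proof -
  have "flip_run = (\<lambda>w. (fst (fst w), (\<lambda>(\<omega>, c) i. flip_label p (c i, \<omega> i)) (snd (fst w), snd w)))"
    by (auto simp: flip_run_def)
  then show ?thesis
    using flip_samples_measurable unfolding run_space_def by simp
qed

lemma emeasure_flip_run_measurable:
  assumes E: "E \<in> sets (run_space D)"
  shows "(\<lambda>z. emeasure coins {c. flip_run (z, c) \<in> E}) \<in> borel_measurable (run_space D)"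
proof -
  define X where "X = flip_run -` E \<inter> space (run_space D \<Otimes>\<^sub>M coins)"
  have X: "X \<in> sets (run_space D \<Otimes>\<^sub>M coins)"
    unfolding X_def using flip_run_measurable E by (rule measurable_sets)
  have "{c. flip_run (z, c) \<in> E} = Pair z -` X" for z
    by (auto simp: X_def space_pair_measure space_PiM)
  then show ?thesis
    using coins.measurable_emeasure_Pair[OF X] by simp
qed

lemma emeasure_run_space_flip_dist:
  assumes E: "E \<in> sets (run_space D)"
  shows "emeasure (run_space (flip_dist r p D)) E =
    (\<integral>\<^sup>+z. emeasure coins {c. flip_run (z, c) \<in> E} \<partial>run_space D)"
proof -
  let ?PK = "samples (flip_dist r p D)"
  let ?Phi = "\<lambda>(\<omega>, c) i. flip_label p (c i, \<omega> i)"
  define \<psi> where "\<psi> z = emeasure coins {c. flip_run (z, c) \<in> E}" for z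
  interpret K: prob_space ?PK by (rule prob_space_PiM) (rule prob_space_flip_dist)
  have Phi: "?Phi \<in> measurable (samples D \<Otimes>\<^sub>M coins) ?PK"
    using flip_label_measurable[of p r]
    by (intro measurable_PiM_pointwise) (simp add: measurable_cong_sets[OF refl sets_flip_dist])
  have couple: "distr (samples D \<Otimes>\<^sub>M coins) ?PK ?Phi = ?PK"
    unfolding flip_dist_def
    by (rule distr_PiM_pointwise[OF prob_space_axioms measure_pmf.prob_space_axioms flip_label_measurable])
  have \<psi>: "\<psi> \<in> borel_measurable (run_space D)"
    unfolding \<psi>_def using E by (rule emeasure_flip_run_measurable)
  have EK: "E \<in> sets (seed \<Otimes>\<^sub>M ?PK)"
    using E sets_run_space_flip_dist unfolding run_space_def by simp
  have "emeasure (run_space (flip_dist r p D)) E = (\<integral>\<^sup>+u. emeasure ?PK (Pair u -` E) \<partial>seed)"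
    unfolding run_space_def by (rule K.emeasure_pair_measure_alt[OF EK])
  also have "\<dots> = (\<integral>\<^sup>+u. (\<integral>\<^sup>+\<omega>. \<psi> (u, \<omega>) \<partial>samples D) \<partial>seed)"
  proof (rule nn_integral_cong)
    fix u
    have Eu: "Pair u -` E \<in> sets ?PK" using EK by (rule sets_Pair1)
    have "emeasure ?PK (Pair u -` E) = emeasure (distr (samples D \<Otimes>\<^sub>M coins) ?PK ?Phi) (Pair u -` E)"
      by (simp only: couple)
    also have "\<dots> = emeasure (samples D \<Otimes>\<^sub>M coins) (?Phi -` Pair u -` E \<inter> space (samples D \<Otimes>\<^sub>M coins))"
      by (rule emeasure_distr[OF Phi Eu])
    also have "\<dots> = (\<integral>\<^sup>+\<omega>. emeasure coins (Pair \<omega> -` (?Phi -` Pair u -` E \<inter> space (samples D \<Otimes>\<^sub>M coins))) \<partial>samples D)"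
      by (rule coins.emeasure_pair_measure_alt) (rule measurable_sets[OF Phi Eu])
    also have "\<dots> = (\<integral>\<^sup>+\<omega>. \<psi> (u, \<omega>) \<partial>samples D)"
      unfolding \<psi>_def flip_run_def
      by (intro nn_integral_cong arg_cong2[where f=emeasure]) (auto simp: space_pair_measure space_PiM)
    finally show "emeasure ?PK (Pair u -` E) = (\<integral>\<^sup>+\<omega>. \<psi> (u, \<omega>) \<partial>samples D)" .
  qed
  also have "\<dots> = (\<integral>\<^sup>+z. \<psi> z \<partial>run_space D)"
    using \<psi> unfolding run_space_def by (rule samples.nn_integral_fst)
  finally show ?thesis unfolding \<psi>_def .
qed

lemma flip_run_in_good_runs:
  assumes good: "(u, \<omega>) \<in> good_runs \<alpha> A D"
    and kept: "\<And>e. e \<in> set (final_hist A u (fst \<circ> \<omega>) (snd \<circ> \<omega>)) \<Longrightarrow> \<not> snd e \<Longrightarrow> fst (\<omega> (fst e)) = p \<Longrightarrow> c (fst e)"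
  shows "flip_run ((u, \<omega>), c) \<in> good_runs \<alpha> A D"
proof -
  have "(u, \<lambda>i. flip_label p (c i, \<omega> i)) \<in> good_runs \<alpha> A D"
  proof (rule good_runs_cong_queried[OF good])
    show "fst \<circ> (\<lambda>i. flip_label p (c i, \<omega> i)) = fst \<circ> \<omega>"
      by (auto simp: flip_label_def case_prod_beta)
    fix e assume e: "e \<in> set (final_hist A u (fst \<circ> \<omega>) (snd \<circ> \<omega>))"
    then have "snd e = snd (\<omega> (fst e))"
      using snd_in_hist unfolding final_hist_def by fastforce
    with kept[OF e] show "snd (flip_label p (c (fst e), \<omega> (fst e))) = snd (\<omega> (fst e))"
      by (auto simp: flip_label_def case_prod_beta)
  qed
  then show ?thesis unfolding flip_run_def by simp
qed

text \<open>A run depends only on the labels it queries, so it stays good whenever every queried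
  negative example at \<open>p\<close> keeps its label.\<close>

lemma good_runs_flip_run:
  assumes E: "good_runs \<alpha> A D \<in> sets (run_space D)" and z: "z \<in> good_runs \<alpha> A D"
  shows "ennreal (r ^ neg_queries_at A p z) \<le> emeasure coins {c. flip_run (z, c) \<in> good_runs \<alpha> A D}"
proof -
  obtain u \<omega> where z_eq: "z = (u, \<omega>)" by (cases z)
  let ?neg_at_p = "\<lambda>e. \<not> snd e \<and> fst (\<omega> (fst e)) = p"
  define Q where "Q = fst ` set (filter ?neg_at_p (final_hist A u (fst \<circ> \<omega>) (snd \<circ> \<omega>)))"
  have "card Q \<le> length (filter ?neg_at_p (final_hist A u (fst \<circ> \<omega>) (snd \<circ> \<omega>)))"
    unfolding Q_def using card_image_le card_length le_trans by blast
  then have "card Q \<le> neg_queries_at A p z"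
    unfolding neg_queries_at_def z_eq by simp
  then have "ennreal (r ^ neg_queries_at A p z) \<le> ennreal (r ^ card Q)"
    using r_pos r_less_1 by (intro ennreal_leI power_decreasing) auto
  also have "\<dots> = emeasure coins {c. \<forall>i\<in>Q. c i}"
    unfolding Q_def using r_pos r_less_1 by (subst emeasure_PiM_bernoulli_all_True) (auto simp: ennreal_power)
  also have "\<dots> \<le> emeasure coins {c. flip_run (z, c) \<in> good_runs \<alpha> A D}"
  proof (rule emeasure_mono)
    show "{c. \<forall>i\<in>Q. c i} \<subseteq> {c. flip_run (z, c) \<in> good_runs \<alpha> A D}"
    proof safe
      fix c :: "nat \<Rightarrow> bool" assume c: "\<forall>i\<in>Q. c i"
      show "flip_run (z, c) \<in> good_runs \<alpha> A D"
        unfolding z_eq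
      proof (rule flip_run_in_good_runs[OF z[unfolded z_eq]])
        fix e assume "e \<in> set (final_hist A u (fst \<circ> \<omega>) (snd \<circ> \<omega>))" "\<not> snd e" "fst (\<omega> (fst e)) = p"
        then have "fst e \<in> Q" unfolding Q_def by force
        with c show "c (fst e)" by blast
      qed
    qed
    have "(\<lambda>c. flip_run (z, c)) \<in> measurable coins (run_space D)"
      using flip_run_measurable by measurable
    from measurable_sets[OF this E]
    show "{c. flip_run (z, c) \<in> good_runs \<alpha> A D} \<in> sets coins"
      by (simp add: vimage_def space_PiM)
  qed
  finally show ?thesis .
qed

lemma neg_queries_at_lower_bound:
  assumes learns: "learns \<alpha> \<delta> A D" and learns_flip: "learns \<alpha> \<delta> A (flip_dist r p D)"
    and disjoint: "good_runs \<alpha> A D \<inter> good_runs \<alpha> A (flip_dist r p D) = {}"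
    and \<delta>: "0 < \<delta>" "\<delta> \<le> 1/2"
  shows "\<exists>g \<in> borel_measurable (run_space D). (\<forall>z. 0 \<le> g z) \<and>
    (\<forall>z \<in> good_runs \<alpha> A D. g z \<le> real (neg_queries_at A p z)) \<and>
    ennreal ((1 - \<delta>) * ln ((1 - \<delta>) / \<delta>) / ln (1 / r))
      \<le> (\<integral>\<^sup>+z. indicator (good_runs \<alpha> A D) z * ennreal (g z) \<partial>run_space D)"
proof -
  let ?E = "good_runs \<alpha> A D" and ?E' = "good_runs \<alpha> A (flip_dist r p D)"
  let ?R' = "run_space (flip_dist r p D)"
  define \<psi> where "\<psi> z = measure coins {c. flip_run (z, c) \<in> ?E}" for z
  interpret R': prob_space ?R'
    unfolding run_space_def by (intro prob_space_pair prob_space_PiM prob_space_flip_dist) unfold_locales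
  have E: "?E \<in> sets (run_space D)" and E': "?E' \<in> sets ?R'"
    using learns learns_flip \<delta> by (auto intro: good_runs_sets)
  have E_flip: "?E \<in> sets ?R'"
    using E sets_run_space_flip_dist by simp
  have \<psi>_emeasure: "emeasure coins {c. flip_run (z, c) \<in> ?E} = ennreal (\<psi> z)" for z
    unfolding \<psi>_def by (rule coins.emeasure_eq_measure)
  have \<psi>_measurable: "\<psi> \<in> borel_measurable (run_space D)"
    using emeasure_flip_run_measurable[OF E] unfolding \<psi>_def measure_def by measurable
  have \<psi>_bounds: "0 \<le> \<psi> z \<and> \<psi> z \<le> 1" for z
    unfolding \<psi>_def by simp
  have "ennreal (integral\<^sup>L (run_space D) \<psi>) = (\<integral>\<^sup>+z. ennreal (\<psi> z) \<partial>run_space D)"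
    using \<psi>_measurable \<psi>_bounds
    by (intro nn_integral_eq_integral[symmetric] run.integrable_const_bound[where B=1]) auto
  also have "\<dots> = ennreal (measure ?R' ?E)"
    using emeasure_run_space_flip_dist[OF E]
    by (simp add: \<psi>_emeasure R'.emeasure_eq_measure)
  finally have "integral\<^sup>L (run_space D) \<psi> = measure ?R' ?E"
    using \<psi>_bounds by (subst (asm) ennreal_inj) (auto intro!: integral_nonneg_AE)
  also have "\<dots> \<le> \<delta>"
  proof -
    have "measure ?R' ?E + measure ?R' ?E' \<le> 1"
      using R'.finite_measure_Union[OF E_flip E' disjoint] R'.prob_le_1[of "?E \<union> ?E'"] by simp
    then show ?thesis
      using learns_flip unfolding learns_iff_good_runs by simp
  qed
  finally have \<psi>_integral: "integral\<^sup>L (run_space D) \<psi> \<le> \<delta>" .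
  have \<psi>_good: "r ^ neg_queries_at A p z \<le> \<psi> z" if "z \<in> ?E" for z
    using good_runs_flip_run[OF E that] \<psi>_bounds[of z] by (simp add: \<psi>_emeasure)
  show ?thesis
    using change_of_measure_bound[OF run.prob_space_axioms E _ \<psi>_measurable \<psi>_bounds \<psi>_integral \<psi>_good \<delta> r_pos r_less_1]
      learns unfolding learns_iff_good_runs by blast
qed

end

section \<open>The hard distributions\<close>

lemma err_H_le_err: "a \<in> {0..1} \<Longrightarrow> err_H D \<le> err D (thr a)"
  unfolding err_H_def err_def by (rule cINF_lower) (auto intro: bdd_belowI[where m=0])

lemma err_H_greatest: "(\<And>a. a \<in> {0..1} \<Longrightarrow> c \<le> err D (thr a)) \<Longrightarrow> c \<le> err_H D"
  unfolding err_H_def by (rule cINF_greatest) auto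

definition grid :: "nat \<Rightarrow> nat \<Rightarrow> real" where
  "grid J k = real k / real (J + 1)"

lemma grid_nonneg [simp]: "0 \<le> grid J k"
  unfolding grid_def by simp

lemma grid_le_1: "k \<le> J + 1 \<Longrightarrow> grid J k \<le> 1"
  unfolding grid_def by (auto simp: divide_le_eq)

lemma grid_less_1: "k \<le> J \<Longrightarrow> grid J k < 1"
  unfolding grid_def by (simp add: divide_less_eq)

lemma grid_le_iff: "grid J i \<le> grid J k \<longleftrightarrow> i \<le> k"
  unfolding grid_def by (simp add: divide_le_cancel)

lemma grid_eq_iff: "grid J i = grid J k \<longleftrightarrow> i = k"
  unfolding grid_def by simp

text \<open>Outcome 0 is a negative example at 1 (noise of mass \<open>\<eta>\<close> that no threshold in [0,1]
  avoids), outcome \<open>i \<in> {1..J}\<close> a negative example at the grid point \<open>i / (J + 1)\<close> with mass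
  \<open>q ^ i\<close>, and outcome \<open>J + 1\<close> a positive example at 1 carrying the remaining mass.\<close>

definition hard_weight :: "nat \<Rightarrow> real \<Rightarrow> real \<Rightarrow> nat \<Rightarrow> real" where
  "hard_weight J \<eta> q i = (if i = 0 then \<eta> else if i \<le> J then q ^ i
     else if i = J + 1 then 1 - \<eta> - (\<Sum>k\<in>{1..J}. q ^ k) else 0)"

definition hard_point :: "nat \<Rightarrow> nat \<Rightarrow> real \<times> bool" where
  "hard_point J i = (if i = 0 then (1, False) else if i \<le> J then (grid J i, False) else (1, True))"

definition hard_dist :: "nat \<Rightarrow> real \<Rightarrow> real \<Rightarrow> (real \<times> bool) measure" where
  "hard_dist J \<eta> q =
     distr (measure_pmf (embed_pmf (hard_weight J \<eta> q))) (borel \<Otimes>\<^sub>M count_space UNIV) (hard_point J)"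

locale hard_instance =
  fixes J :: nat and \<eta> q :: real
  assumes noise_nonneg: "0 \<le> \<eta>" and q_nonneg: "0 \<le> q"
    and total_le_1: "\<eta> + (\<Sum>k\<in>{1..J}. q ^ k) \<le> 1"
begin

abbreviation D0 :: "(real \<times> bool) measure" where
  "D0 \<equiv> hard_dist J \<eta> q"

abbreviation hard_pmf :: "nat pmf" where
  "hard_pmf \<equiv> embed_pmf (hard_weight J \<eta> q)"

lemma hard_weight_nonneg: "0 \<le> hard_weight J \<eta> q i"
  unfolding hard_weight_def using noise_nonneg q_nonneg total_le_1 by auto

lemma hard_weight_eq_0: "i \<notin> {0..J+1} \<Longrightarrow> hard_weight J \<eta> q i = 0"
  unfolding hard_weight_def by auto

lemma sum_hard_weight: "(\<Sum>i\<in>{0..J+1}. hard_weight J \<eta> q i) = 1"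
proof -
  have "{0..J+1} = insert 0 (insert (J+1) {1..J})" by auto
  moreover have "(\<Sum>i\<in>{1..J}. hard_weight J \<eta> q i) = (\<Sum>k\<in>{1..J}. q ^ k)"
    by (rule sum.cong) (auto simp: hard_weight_def)
  ultimately show ?thesis by (simp add: hard_weight_def)
qed

lemma pmf_hard_pmf: "pmf hard_pmf i = hard_weight J \<eta> q i"
proof (rule pmf_embed_pmf)
  have "(\<integral>\<^sup>+i. ennreal (hard_weight J \<eta> q i) \<partial>count_space UNIV) = (\<Sum>i\<in>{0..J+1}. ennreal (hard_weight J \<eta> q i))"
    by (rule nn_integral_count_space') (auto simp: hard_weight_eq_0)
  also have "\<dots> = ennreal (\<Sum>i\<in>{0..J+1}. hard_weight J \<eta> q i)"
    by (intro sum_ennreal hard_weight_nonneg)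
  also have "\<dots> = 1"
    by (simp only: sum_hard_weight ennreal_1)
  finally show "(\<integral>\<^sup>+i. ennreal (hard_weight J \<eta> q i) \<partial>count_space UNIV) = 1" .
qed (rule hard_weight_nonneg)

lemma measure_hard_pmf: "measure (measure_pmf hard_pmf) S = (\<Sum>i\<in>S \<inter> {0..J+1}. hard_weight J \<eta> q i)"
proof -
  have "set_pmf hard_pmf \<subseteq> {0..J+1}"
  proof
    fix i assume "i \<in> set_pmf hard_pmf"
    then have "hard_weight J \<eta> q i \<noteq> 0" by (simp add: set_pmf_iff pmf_hard_pmf)
    then show "i \<in> {0..J+1}" using hard_weight_eq_0 by blast
  qed
  then have "measure (measure_pmf hard_pmf) S = measure (measure_pmf hard_pmf) (S \<inter> {0..J+1})"
    by (metis Int_assoc inf.absorb_iff2 measure_Int_set_pmf)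
  also have "\<dots> = (\<Sum>i\<in>S \<inter> {0..J+1}. hard_weight J \<eta> q i)"
    by (subst measure_measure_pmf_finite) (auto simp: pmf_hard_pmf)
  finally show ?thesis .
qed

lemma hard_point_measurable: "hard_point J \<in> measurable (measure_pmf hard_pmf) (borel \<Otimes>\<^sub>M count_space UNIV)"
  by (simp add: measurable_cong_sets[OF sets_measure_pmf_count_space refl] space_pair_measure)

sublocale example_distribution D0
  unfolding example_distribution_def example_distribution_axioms_def hard_dist_def
  using hard_point_measurable by (auto intro: measure_pmf.prob_space_distr)

lemma valid_dist_hard_dist: "valid_dist D0"
proof -
  have "AE i in measure_pmf hard_pmf. fst (hard_point J i) \<in> {0..1}"
    by (auto simp: AE_measure_pmf_iff hard_point_def grid_le_1)
  moreover have "{z \<in> space (borel \<Otimes>\<^sub>M count_space UNIV). fst z \<in> {0..1::real}}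
      \<in> sets (borel \<Otimes>\<^sub>M count_space UNIV)"
    by measurable
  ultimately have "AE z in D0. fst z \<in> {0..1}"
    unfolding hard_dist_def by (subst AE_distr_iff[OF hard_point_measurable]) auto
  then show ?thesis
    unfolding valid_dist_def using prob_space_axioms sets_D by blast
qed

lemma measure_hard_dist:
  "X \<in> sets (borel \<Otimes>\<^sub>M count_space UNIV) \<Longrightarrow>
    measure D0 X = (\<Sum>i\<in>{i\<in>{0..J+1}. hard_point J i \<in> X}. hard_weight J \<eta> q i)"
  unfolding hard_dist_def
  by (subst measure_distr[OF hard_point_measurable]) (auto simp: measure_hard_pmf intro!: sum.cong)

lemma err_hard_dist:
  "err D0 (thr a) = (\<Sum>i\<in>{i\<in>{0..J+1}. thr a (fst (hard_point J i)) \<noteq> snd (hard_point J i)}. hard_weight J \<eta> q i)"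
  unfolding err_def using measure_hard_dist[OF sets_thr_err[of a]] by simp

lemma flip_err_hard_dist:
  "flip_err D0 p (thr a) = (\<Sum>i\<in>{i\<in>{0..J+1}.
     thr a (fst (hard_point J i)) \<noteq> (snd (hard_point J i) \<or> fst (hard_point J i) = p)}. hard_weight J \<eta> q i)"
proof -
  have "{z \<in> space (borel \<Otimes>\<^sub>M count_space UNIV). thr a (fst z) \<noteq> (snd z \<or> fst z = p)}
      \<in> sets (borel \<Otimes>\<^sub>M count_space UNIV)"
    unfolding thr_def by measurable
  then show ?thesis
    unfolding flip_err_def using measure_hard_dist by (simp add: space_pair_measure)
qed

lemma sum_hard_weight_mono:
  "A \<subseteq> B \<Longrightarrow> B \<subseteq> {0..J+1} \<Longrightarrow> (\<Sum>i\<in>A. hard_weight J \<eta> q i) \<le> (\<Sum>i\<in>B. hard_weight J \<eta> q i)"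
  by (rule sum_mono2) (auto intro: finite_subset hard_weight_nonneg)

lemma noise_le_err: "a \<le> 1 \<Longrightarrow> \<eta> \<le> err D0 (thr a)"
proof -
  assume a: "a \<le> 1"
  have "(\<Sum>i\<in>{0}. hard_weight J \<eta> q i) \<le> err D0 (thr a)"
    unfolding err_hard_dist by (rule sum_hard_weight_mono) (use a in \<open>auto simp: hard_point_def thr_def\<close>)
  then show ?thesis by (simp add: hard_weight_def)
qed

lemma err_thr_1: "err D0 (thr 1) \<le> \<eta>"
proof -
  have "err D0 (thr 1) \<le> (\<Sum>i\<in>{0}. hard_weight J \<eta> q i)"
    unfolding err_hard_dist
    by (rule sum_hard_weight_mono) (auto simp: hard_point_def thr_def dest: grid_less_1 split: if_splits)
  then show ?thesis by (simp add: hard_weight_def)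
qed

lemma err_H_hard_dist: "err_H D0 = \<eta>"
proof (rule antisym)
  show "err_H D0 \<le> \<eta>" using err_H_le_err[of 1 D0] err_thr_1 by simp
  show "\<eta> \<le> err_H D0" by (rule err_H_greatest) (use noise_le_err in auto)
qed

lemma err_left_of_grid: "1 \<le> J \<Longrightarrow> a \<le> grid J J \<Longrightarrow> \<eta> + q ^ J \<le> err D0 (thr a)"
proof -
  assume J: "1 \<le> J" and a: "a \<le> grid J J"
  then have "a \<le> 1" using grid_le_1[of J J] by linarith
  with J a have "(\<Sum>i\<in>{0, J}. hard_weight J \<eta> q i) \<le> err D0 (thr a)"
    unfolding err_hard_dist by (intro sum_hard_weight_mono) (auto simp: hard_point_def thr_def)
  then show ?thesis using J by (simp add: hard_weight_def)
qed

lemma noise_le_flip_err: "a \<le> 1 \<Longrightarrow> j \<le> J \<Longrightarrow> \<eta> \<le> flip_err D0 (grid J j) (thr a)"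
proof -
  assume a: "a \<le> 1" and j: "j \<le> J"
  have "(\<Sum>i\<in>{0}. hard_weight J \<eta> q i) \<le> flip_err D0 (grid J j) (thr a)"
    unfolding flip_err_hard_dist
    by (rule sum_hard_weight_mono) (use a grid_less_1[OF j] in \<open>auto simp: hard_point_def thr_def\<close>)
  then show ?thesis by (simp add: hard_weight_def)
qed

lemma flip_err_right_of_grid:
  assumes j: "1 \<le> j" "j \<le> J" and a: "grid J J < a" "a \<le> 1"
  shows "\<eta> + q ^ j \<le> flip_err D0 (grid J j) (thr a)"
proof -
  have "grid J j \<le> grid J J" using j by (simp add: grid_le_iff)
  with a have "(\<Sum>i\<in>{0, j}. hard_weight J \<eta> q i) \<le> flip_err D0 (grid J j) (thr a)"
    unfolding flip_err_hard_dist
    by (intro sum_hard_weight_mono) (use j grid_less_1[of j J] in \<open>auto simp: hard_point_def thr_def\<close>)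
  then show ?thesis using j by (simp add: hard_weight_def)
qed

lemma err_thr_grid: "1 \<le> j \<Longrightarrow> j \<le> J \<Longrightarrow> err D0 (thr (grid J j)) \<le> \<eta> + (\<Sum>k\<in>{j..J}. q ^ k)"
proof -
  assume j: "1 \<le> j" "j \<le> J"
  have "err D0 (thr (grid J j)) \<le> (\<Sum>i\<in>insert 0 {j..J}. hard_weight J \<eta> q i)"
    unfolding err_hard_dist
    by (rule sum_hard_weight_mono) (use j in \<open>auto simp: hard_point_def thr_def grid_le_iff grid_le_1 split: if_splits\<close>)
  also have "\<dots> = \<eta> + (\<Sum>k\<in>{j..J}. q ^ k)"
    using j by (auto simp: hard_weight_def intro!: sum.cong)
  finally show ?thesis .
qed

lemma flip_err_thr_grid:
  "1 \<le> j \<Longrightarrow> j \<le> J \<Longrightarrow> flip_err D0 (grid J j) (thr (grid J j)) \<le> \<eta> + (\<Sum>k\<in>{Suc j..J}. q ^ k)"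
proof -
  assume j: "1 \<le> j" "j \<le> J"
  have "flip_err D0 (grid J j) (thr (grid J j)) \<le> (\<Sum>i\<in>insert 0 {Suc j..J}. hard_weight J \<eta> q i)"
    unfolding flip_err_hard_dist
    by (rule sum_hard_weight_mono)
      (use j in \<open>auto simp: hard_point_def thr_def grid_le_iff grid_eq_iff grid_le_1 not_less_eq_eq split: if_splits\<close>)
  also have "\<dots> = \<eta> + (\<Sum>k\<in>{Suc j..J}. q ^ k)"
    using j by (auto simp: hard_weight_def intro!: sum.cong)
  finally show ?thesis .
qed

lemma err_H_flip_hard_dist_ge:
  assumes "0 \<le> r" "r \<le> 1" "j \<le> J"
  shows "\<eta> \<le> err_H (flip_dist r (grid J j) D0)"
proof (rule err_H_greatest)
  fix a :: real assume a: "a \<in> {0..1}"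
  have "r * \<eta> + (1 - r) * \<eta> \<le> r * err D0 (thr a) + (1 - r) * flip_err D0 (grid J j) (thr a)"
    using noise_le_err[of a] noise_le_flip_err[of a j] a assms by (intro add_mono mult_left_mono) auto
  then show "\<eta> \<le> err (flip_dist r (grid J j) D0) (thr a)"
    using err_flip_dist[of r "grid J j" a] assms by (simp add: algebra_simps)
qed

end


lemma sum_power_tail_le:
  fixes q :: real
  assumes "0 \<le> q" "q < 1"
  shows "(\<Sum>k\<in>{Suc j..J}. q ^ k) \<le> q ^ Suc j / (1 - q)"
proof -
  have "(\<Sum>k\<in>{Suc j..J}. q ^ k) = (if J < Suc j then 0 else (q ^ Suc j - q ^ Suc J) / (1 - q))"
    using assms by (simp add: sum_gp)
  also have "\<dots> \<le> q ^ Suc j / (1 - q)"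
    using assms by (auto intro!: divide_right_mono)
  finally show ?thesis .
qed

text \<open>With these constants each mass \<open>q ^ j\<close> exceeds \<open>K\<close> times the noise and the tail beyond it,
  which separates the \<open>(1 + \<alpha>)\<close>-optimal thresholds of the hard distribution from those of its flips.\<close>

locale lower_bound_constants =
  fixes \<alpha> :: real
  assumes alpha_nonneg: "0 \<le> \<alpha>"
begin

definition K :: real where "K = 8 * (1 + \<alpha>)"
definition \<beta> :: real where "\<beta> = K + 1"
definition q :: real where "q = 1 / \<beta>"
definition r :: real where "r = 1 / K"
definition max_noise :: real where "max_noise = 1 / (K\<^sup>2 * \<beta>\<^sup>2)"

lemma K_ge_8: "8 \<le> K"
  unfolding K_def using alpha_nonneg by simp

lemma beta_ge_9: "9 \<le> \<beta>"
  unfolding \<beta>_def using K_ge_8 by simp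

lemma ln_K_pos: "0 < ln K"
  using K_ge_8 by simp

lemma ln_beta_pos: "0 < ln \<beta>"
  using beta_ge_9 by simp

lemma q_pos: "0 < q" and q_less_1: "q < 1"
  unfolding q_def using beta_ge_9 by auto

lemma r_pos: "0 < r" and r_le: "r \<le> 1/8"
  unfolding r_def using K_ge_8 by (auto simp: divide_le_eq)

lemma max_noise_pos: "0 < max_noise"
  unfolding max_noise_def using K_ge_8 beta_ge_9 by simp

lemma max_noise_le_half: "max_noise \<le> 1 / 2"
proof -
  have "8\<^sup>2 * 9\<^sup>2 \<le> K\<^sup>2 * \<beta>\<^sup>2"
    using K_ge_8 beta_ge_9 by (intro mult_mono power_mono) auto
  then show ?thesis
    unfolding max_noise_def by (simp add: field_simps)
qed

lemma sum_power_q_tail_le: "(\<Sum>k\<in>{Suc j..J}. q ^ k) \<le> q ^ j / K"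
proof -
  have "(\<Sum>k\<in>{Suc j..J}. q ^ k) \<le> q ^ j * (q / (1 - q))"
    using sum_power_tail_le[OF less_imp_le[OF q_pos] q_less_1] by (simp add: mult.commute)
  also have "q / (1 - q) = 1 / K"
    unfolding q_def \<beta>_def using K_ge_8 by (simp add: field_simps)
  finally show ?thesis by simp
qed

end

locale lower_bound = lower_bound_constants +
  fixes \<eta> :: real
  assumes eta_pos: "0 < \<eta>" and eta_le_max_noise: "\<eta> \<le> max_noise"
begin

definition J :: nat where "J = nat \<lfloor>ln (1 / (K * \<eta>)) / ln \<beta>\<rfloor>"

lemma J_bounds:
  shows one_le_J: "1 \<le> J"
    and J_ge: "ln (1 / \<eta>) / (2 * ln \<beta>) \<le> real J"
    and noise_le_q_power_J: "K * \<eta> \<le> q ^ J"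
proof -
  have K_pos: "0 < K" and beta_pos: "0 < \<beta>" using K_ge_8 beta_ge_9 by auto
  have "ln (K\<^sup>2 * \<beta>\<^sup>2) \<le> ln (1 / \<eta>)"
    using eta_pos eta_le_max_noise K_pos beta_pos unfolding max_noise_def
    by (subst ln_le_cancel_iff) (auto simp: field_simps)
  then have log_eta: "2 * ln K + 2 * ln \<beta> \<le> ln (1 / \<eta>)"
    using K_pos beta_pos by (simp add: ln_mult ln_realpow)
  define y where "y = ln (1 / (K * \<eta>)) / ln \<beta>"
  have ln_K_eta: "ln (1 / (K * \<eta>)) = ln (1 / \<eta>) - ln K"
    using K_pos eta_pos by (simp add: ln_div ln_mult)
  have "0 \<le> y" unfolding y_def using ln_K_eta log_eta ln_K_pos ln_beta_pos by simp
  then have J_y: "real J \<le> y" "y - 1 < real J" unfolding J_def y_def[symmetric] by linarith+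
  have "y - 1 = (ln (1 / \<eta>) - ln K - ln \<beta>) / ln \<beta>"
    unfolding y_def ln_K_eta using ln_beta_pos by (simp add: field_simps)
  also have "\<dots> \<ge> (ln (1 / \<eta>) / 2) / ln \<beta>"
    using log_eta ln_K_pos ln_beta_pos by (intro divide_right_mono) auto
  finally show J_ge: "ln (1 / \<eta>) / (2 * ln \<beta>) \<le> real J"
    using J_y by (simp add: field_simps)
  have "(2 * ln \<beta>) / (2 * ln \<beta>) \<le> ln (1 / \<eta>) / (2 * ln \<beta>)"
    using log_eta ln_K_pos ln_beta_pos by (intro divide_right_mono) auto
  then have "1 \<le> ln (1 / \<eta>) / (2 * ln \<beta>)" using ln_beta_pos by simp
  then show "1 \<le> J" using J_ge by linarith
  have "real J * ln \<beta> \<le> ln (1 / (K * \<eta>))"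
    using J_y(1) ln_beta_pos unfolding y_def by (simp add: le_divide_eq)
  then have "\<beta> ^ J \<le> 1 / (K * \<eta>)"
    using beta_pos K_pos eta_pos by (simp add: ln_realpow[symmetric])
  then show "K * \<eta> \<le> q ^ J"
    unfolding q_def using beta_pos K_pos eta_pos by (simp add: power_one_over field_simps)
qed

sublocale hard_instance J \<eta> q
proof
  have "(\<Sum>k\<in>{1..J}. q ^ k) \<le> 1 / K"
    using sum_power_q_tail_le[of 0 J] by simp
  also have "\<dots> \<le> 1 / 8"
    using K_ge_8 by (simp add: divide_le_eq)
  finally show "\<eta> + (\<Sum>k\<in>{1..J}. q ^ k) \<le> 1"
    using eta_le_max_noise max_noise_le_half by linarith
qed (use eta_pos q_pos in auto)

lemma noise_le_q_power: "j \<le> J \<Longrightarrow> \<eta> \<le> q ^ j / K"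
proof -
  assume "j \<le> J"
  then have "q ^ J \<le> q ^ j"
    using q_pos q_less_1 by (intro power_decreasing) auto
  then show ?thesis
    using noise_le_q_power_J K_ge_8 by (simp add: field_simps)
qed

lemma good_threshold_right_of_grid:
  assumes "err D0 (thr a) \<le> (1 + \<alpha>) * err_H D0"
  shows "grid J J < a"
proof (rule ccontr)
  assume "\<not> grid J J < a"
  then have "\<eta> + q ^ J \<le> (1 + \<alpha>) * \<eta>"
    using err_left_of_grid[OF one_le_J, of a] assms err_H_hard_dist by simp
  then have "K * \<eta> \<le> \<alpha> * \<eta>"
    using noise_le_q_power_J by (simp add: algebra_simps)
  then show False
    unfolding K_def using eta_pos alpha_nonneg by simp
qed

lemma err_flip_dist_right_of_grid:
  assumes j: "1 \<le> j" "j \<le> J" and a: "grid J J < a" "a \<le> 1"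
  shows "\<eta> + (1 - r) * q ^ j \<le> err (flip_dist r (grid J j) D0) (thr a)"
proof -
  have r01: "0 \<le> r" "r \<le> 1" using r_pos r_le by auto
  have "r * \<eta> + (1 - r) * (\<eta> + q ^ j) \<le> r * err D0 (thr a) + (1 - r) * flip_err D0 (grid J j) (thr a)"
    using noise_le_err[of a] flip_err_right_of_grid[OF j a] a r01 by (intro add_mono mult_left_mono) auto
  then show ?thesis
    using err_flip_dist[OF r01, of "grid J j" a] by (simp add: algebra_simps)
qed

lemma err_H_flip_dist_le:
  assumes j: "1 \<le> j" "j \<le> J"
  shows "err_H (flip_dist r (grid J j) D0) \<le> 3 * q ^ j / K"
proof -
  define S where "S = (\<Sum>k\<in>{Suc j..J}. q ^ k)"
  have r01: "0 \<le> r" "r \<le> 1" using r_pos r_le by auto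
  have "err_H (flip_dist r (grid J j) D0) \<le> err (flip_dist r (grid J j) D0) (thr (grid J j))"
    using j by (intro err_H_le_err) (auto intro: grid_le_1)
  also have "\<dots> = r * err D0 (thr (grid J j)) + (1 - r) * flip_err D0 (grid J j) (thr (grid J j))"
    by (rule err_flip_dist[OF r01])
  also have "\<dots> \<le> r * (\<eta> + (q ^ j + S)) + (1 - r) * (\<eta> + S)"
  proof -
    have "(\<Sum>k\<in>{j..J}. q ^ k) = q ^ j + S"
      using j unfolding S_def by (simp add: sum.atLeast_Suc_atMost)
    then show ?thesis
      using err_thr_grid[OF j] flip_err_thr_grid[OF j] r01 unfolding S_def
      by (intro add_mono mult_left_mono) auto
  qed
  also have "\<dots> = \<eta> + q ^ j / K + S"
    unfolding r_def by (simp add: algebra_simps add_divide_distrib)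
  also have "\<dots> \<le> 3 * q ^ j / K"
    using noise_le_q_power[OF j(2)] sum_power_q_tail_le[of j J] unfolding S_def by simp
  finally show ?thesis .
qed

lemma flip_dist_separates:
  assumes j: "j \<in> {1..J}" and a: "a \<in> {0..1}"
    and good: "err D0 (thr a) \<le> (1 + \<alpha>) * err_H D0"
  shows "(1 + \<alpha>) * err_H (flip_dist r (grid J j) D0) < err (flip_dist r (grid J j) D0) (thr a)"
proof -
  have j1: "1 \<le> j" "j \<le> J" using j by auto
  have "(1 + \<alpha>) * err_H (flip_dist r (grid J j) D0) \<le> (1 + \<alpha>) * (3 * q ^ j / K)"
    using err_H_flip_dist_le[OF j1] alpha_nonneg by (intro mult_left_mono) auto
  also have "\<dots> = 3 * q ^ j / 8"
    unfolding K_def using alpha_nonneg by (simp add: field_simps)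
  also have "\<dots> < \<eta> + (1 - r) * q ^ j"
  proof -
    have "r * q ^ j \<le> q ^ j / 8" using r_le q_pos by (simp add: mult_right_mono)
    moreover have "(1 - r) * q ^ j = q ^ j - r * q ^ j" by (simp add: left_diff_distrib)
    moreover have "0 < q ^ j" using q_pos by simp
    ultimately show ?thesis using eta_pos by linarith
  qed
  also have "\<dots> \<le> err (flip_dist r (grid J j) D0) (thr a)"
    using err_flip_dist_right_of_grid[OF j1 good_threshold_right_of_grid[OF good]] a by simp
  finally show ?thesis .
qed

lemma good_runs_disjoint:
  assumes "j \<in> {1..J}"
  shows "good_runs \<alpha> A D0 \<inter> good_runs \<alpha> A (flip_dist r (grid J j) D0) = {}"
  using flip_dist_separates[OF assms] unfolding good_runs_def Let_def by fastforce

lemma neg_queries_at_grid_lower_bound: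
  assumes \<delta>: "0 < \<delta>" "\<delta> \<le> 1/2"
    and learns: "\<forall>D. valid_dist D \<and> \<eta> \<le> err_H D \<longrightarrow> learns \<alpha> \<delta> A D"
    and j: "j \<in> {1..J}"
  shows "\<exists>g \<in> borel_measurable (run_space D0). (\<forall>z. 0 \<le> g z) \<and>
    (\<forall>z \<in> good_runs \<alpha> A D0. g z \<le> real (neg_queries_at A (grid J j) z)) \<and>
    ennreal ((1 - \<delta>) * ln ((1 - \<delta>) / \<delta>) / ln K)
      \<le> (\<integral>\<^sup>+z. indicator (good_runs \<alpha> A D0) z * ennreal (g z) \<partial>run_space D0)"
proof -
  interpret flip_coupling D0 r "grid J j"
    using r_pos r_le by unfold_locales auto
  have learns_D0: "learns \<alpha> \<delta> A D0"
    using learns valid_dist_hard_dist err_H_hard_dist by simp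
  have learns_flip: "learns \<alpha> \<delta> A (flip_dist r (grid J j) D0)"
    using learns valid_dist_flip_dist[OF valid_dist_hard_dist] err_H_flip_hard_dist_ge[of r j] r_pos r_le j
    by auto
  from neg_queries_at_lower_bound[OF learns_D0 learns_flip good_runs_disjoint[OF j] \<delta>] show ?thesis
    unfolding r_def by simp
qed

lemma expected_audit_cost_hard_dist_ge:
  assumes \<delta>: "0 < \<delta>" "\<delta> \<le> 1/2"
    and learns: "\<forall>D. valid_dist D \<and> \<eta> \<le> err_H D \<longrightarrow> learns \<alpha> \<delta> A D"
  shows "ennreal (real J * ((1 - \<delta>) * ln ((1 - \<delta>) / \<delta>) / ln K)) \<le> expected_audit_cost A D0"
proof -
  let ?E = "good_runs \<alpha> A D0"
  define B where "B = (1 - \<delta>) * ln ((1 - \<delta>) / \<delta>) / ln K"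
  have E: "?E \<in> sets (run_space D0)"
    using learns valid_dist_hard_dist err_H_hard_dist \<delta> by (intro good_runs_sets) auto
  have "\<forall>j\<in>{1..J}. \<exists>g. g \<in> borel_measurable (run_space D0) \<and> (\<forall>z. 0 \<le> g z) \<and>
      (\<forall>z \<in> ?E. g z \<le> real (neg_queries_at A (grid J j) z)) \<and>
      ennreal B \<le> (\<integral>\<^sup>+z. indicator ?E z * ennreal (g z) \<partial>run_space D0)"
    unfolding B_def using neg_queries_at_grid_lower_bound[OF \<delta> learns] by blast
  from bchoice[OF this] obtain G where G: "\<forall>j\<in>{1..J}. G j \<in> borel_measurable (run_space D0) \<and>
      (\<forall>z. 0 \<le> G j z) \<and> (\<forall>z \<in> ?E. G j z \<le> real (neg_queries_at A (grid J j) z)) \<and>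
      ennreal B \<le> (\<integral>\<^sup>+z. indicator ?E z * ennreal (G j z) \<partial>run_space D0)"
    by blast
  have pointwise: "(\<Sum>j\<in>{1..J}. indicator ?E z * ennreal (G j z))
      \<le> (case z of (u, \<omega>) \<Rightarrow> audit_cost A u (fst \<circ> \<omega>) (snd \<circ> \<omega>))" for z
  proof (cases "z \<in> ?E")
    case True
    obtain u \<omega> where z: "z = (u, \<omega>)" by (cases z)
    have "(\<Sum>j\<in>{1..J}. indicator ?E z * ennreal (G j z))
        \<le> (\<Sum>j\<in>{1..J}. ennreal (real (neg_queries_at A (grid J j) z)))"
      using True G by (intro sum_mono ennreal_leI) auto
    also have "\<dots> = ennreal (\<Sum>p\<in>grid J ` {1..J}. real (neg_queries_at A p z))"
      by (simp add: sum.reindex inj_on_def grid_eq_iff sum_ennreal)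
    also have "\<dots> \<le> audit_cost A u (fst \<circ> \<omega>) (snd \<circ> \<omega>)"
      unfolding z by (rule sum_neg_queries_at_le_audit_cost) simp
    finally show ?thesis unfolding z by simp
  qed simp
  have "1 \<le> (1 - \<delta>) / \<delta>"
    using \<delta> by (simp add: field_simps)
  then have "0 \<le> B"
    unfolding B_def using \<delta> ln_K_pos by (intro divide_nonneg_pos mult_nonneg_nonneg) auto
  then have "ennreal (real J * B) = (\<Sum>j\<in>{1..J}. ennreal B)"
    by (simp add: ennreal_mult' ennreal_of_nat_eq_real_of_nat)
  also have "\<dots> \<le> (\<Sum>j\<in>{1..J}. \<integral>\<^sup>+z. indicator ?E z * ennreal (G j z) \<partial>run_space D0)"
    using G by (intro sum_mono) auto
  also have "\<dots> = (\<integral>\<^sup>+z. (\<Sum>j\<in>{1..J}. indicator ?E z * ennreal (G j z)) \<partial>run_space D0)"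
  proof (rule nn_integral_sum[symmetric])
    fix j assume "j \<in> {1..J}"
    then have [measurable]: "G j \<in> borel_measurable (run_space D0)" using G by blast
    note E[measurable]
    show "(\<lambda>z. indicator ?E z * ennreal (G j z)) \<in> borel_measurable (run_space D0)" by measurable
  qed
  also have "\<dots> \<le> expected_audit_cost A D0"
    unfolding expected_audit_cost_def by (rule nn_integral_mono) (rule pointwise)
  finally show ?thesis unfolding B_def .
qed

lemma expected_audit_cost_hard_dist_lower_bound:
  assumes \<delta>: "0 < \<delta>" "\<delta> < 1"
    and learns: "\<forall>D. valid_dist D \<and> \<eta> \<le> err_H D \<longrightarrow> learns \<alpha> \<delta> A D"
  shows "ennreal (1 / (4 * ln K * ln \<beta>) * ln ((1 - \<delta>) / \<delta>) * ln (1 / \<eta>)) \<le> expected_audit_cost A D0"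
proof (cases "\<delta> < 1/2")
  case True
  have log_odds: "0 \<le> ln ((1 - \<delta>) / \<delta>)"
    using True \<delta> by (simp add: field_simps)
  have "ln (1 / \<eta>) / (2 * ln \<beta>) * (1 / 2) \<le> real J * (1 - \<delta>)"
    using J_ge True by (intro mult_mono) auto
  from mult_right_mono[OF this, of "ln ((1 - \<delta>) / \<delta>) / ln K"]
  have "1 / (4 * ln K * ln \<beta>) * ln ((1 - \<delta>) / \<delta>) * ln (1 / \<eta>)
      \<le> real J * ((1 - \<delta>) * ln ((1 - \<delta>) / \<delta>) / ln K)"
    using log_odds ln_K_pos ln_beta_pos by (simp add: field_simps)
  then show ?thesis
    using expected_audit_cost_hard_dist_ge[OF \<delta>(1) _ learns] True
    by (meson ennreal_leI less_imp_le order_trans)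
next
  case False
  then have "ln ((1 - \<delta>) / \<delta>) \<le> 0"
    using \<delta> by (simp add: divide_le_eq)
  moreover have "0 \<le> ln (1 / \<eta>)"
    using eta_pos eta_le_max_noise max_noise_le_half by simp
  ultimately have "ln ((1 - \<delta>) / \<delta>) * ln (1 / \<eta>) \<le> 0"
    by (rule mult_nonpos_nonneg)
  then have "1 / (4 * ln K * ln \<beta>) * ln ((1 - \<delta>) / \<delta>) * ln (1 / \<eta>) \<le> 0"
    using ln_K_pos ln_beta_pos by (simp add: divide_nonpos_pos)
  then show ?thesis by (simp add: ennreal_neg)
qed

end


theorem theorem2:
  fixes \<alpha> :: real
  assumes "\<alpha> \<ge> 0"
  shows "\<exists>c > 0. \<exists>\<eta>0 \<in> {0<..<1}. \<forall>\<eta>_min \<delta> (A :: auditor).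
           0 < \<eta>_min \<and> \<eta>_min \<le> \<eta>0 \<and> 0 < \<delta> \<and> \<delta> < 1 \<and>
           (\<forall>D. valid_dist D \<and> err_H D \<ge> \<eta>_min \<longrightarrow> learns \<alpha> \<delta> A D) \<longrightarrow>
           (\<exists>D. valid_dist D \<and> err_H D \<ge> \<eta>_min \<and>
                expected_audit_cost A D \<ge> ennreal (c * ln ((1 - \<delta>) / \<delta>) * ln (1 / \<eta>_min)))"
proof -
  interpret lower_bound_constants \<alpha> using assms by unfold_locales
  have c_pos: "0 < 1 / (4 * ln K * ln \<beta>)"
    using ln_K_pos ln_beta_pos by simp
  have max_noise: "max_noise \<in> {0<..<1}"
    using max_noise_pos max_noise_le_half by simp
  show ?thesis
  proof (intro exI[of _ "1 / (4 * ln K * ln \<beta>)"] conjI c_pos bexI[OF _ max_noise] allI impI)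
    fix \<eta> \<delta> A
    assume H: "0 < \<eta> \<and> \<eta> \<le> max_noise \<and> 0 < \<delta> \<and> \<delta> < 1 \<and>
      (\<forall>D. valid_dist D \<and> \<eta> \<le> err_H D \<longrightarrow> learns \<alpha> \<delta> A D)"
    interpret lower_bound \<alpha> \<eta> using H by unfold_locales auto
    show "\<exists>D. valid_dist D \<and> \<eta> \<le> err_H D \<and>
        ennreal (1 / (4 * ln K * ln \<beta>) * ln ((1 - \<delta>) / \<delta>) * ln (1 / \<eta>)) \<le> expected_audit_cost A D"
      using H valid_dist_hard_dist err_H_hard_dist expected_audit_cost_hard_dist_lower_bound by auto
  qed
qed

end
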